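(* Let $d=1$ and $x,y\in\mathbb{R}$. If $1,x,y$ are linearly dependent over $\mathbb{Q}$ and $x$ or $y$ is irrational, then $(x,y)\notin\Pi$.
   Context: For $t\in\mathbb{R}$, $\|t\|$ is the distance from $t$ to $\mathbb{Z}$. Write $\mathbb{N}=\{1,2,\dots\}$. $\mathcal{D}$ is the set of all non-increasing $\psi:\mathbb{N}\to\mathbb{R}_{\ge0}$ with $\sum_n\psi(n)=\infty$. $W(\psi)$ is the set of $(x,y)\in\mathbb{R}^2$ with $\|nx+y\|<\psi(n)$ for infinitely many $n\in\mathbb{N}$, and $\Pi=\bigcap_{\psi\in\mathcal{D}}W(\psi)$. *)

theory Defs
  imports "HOL-Analysis.Analysis"
begin

definition dist_int :: "real \<Rightarrow> real" where
  "dist_int t = (INF k\<in>(\<int>::real set). \<bar>t - k\<bar>)"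

text \<open>Non-increasing psi : N -> R_{>=0} with divergent sum (N = {1,2,...}).\<close>
definition Dset :: "(nat \<Rightarrow> real) set" where
  "Dset = {\<psi>. (\<forall>n\<ge>1. \<psi> n \<ge> 0) \<and> (\<forall>m n. 1 \<le> m \<longrightarrow> m \<le> n \<longrightarrow> \<psi> n \<le> \<psi> m)
               \<and> \<not> summable (\<lambda>n. \<psi> (Suc n))}"

definition W :: "(nat \<Rightarrow> real) \<Rightarrow> (real \<times> real) set" where
  "W \<psi> = {(x, y). infinite {n::nat. n \<ge> 1 \<and> dist_int (real n * x + y) < \<psi> n}}"

definition Pi_set :: "(real \<times> real) set" where
  "Pi_set = (\<Inter>\<psi>\<in>Dset. W \<psi>)"

end

theory Submission
  imports Defs
begin

text \<open>If \<open>x\<close> is rational and \<open>y\<close> is not, \<open>\<parallel>n x + y\<parallel>\<close> is bounded away from \<open>0\<close>, so a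
  constant \<open>\<psi>\<close> works. Otherwise \<open>x\<close> is irrational and \<open>Q y = P + S x\<close> with integers
  \<open>Q > 0, P, S\<close>, so \<open>Q \<parallel>n x + y\<parallel> \<ge> \<parallel>(Q n + S) x\<parallel> \<ge> min {\<parallel>j x\<parallel> | 1 \<le> j \<le> C n}\<close> for large \<open>n\<close>.
  This minimum, divided by \<open>Q\<close>, is a non-increasing \<open>\<psi>\<close>; its sum diverges because a
  convergent monotone series would force \<open>k min {\<parallel>j x\<parallel> | j \<le> k} \<rightarrow> 0\<close>, whereas whenever the
  record approximation improves from \<open>A\<close> to \<open>M\<close> one has \<open>2 M \<parallel>A x\<parallel> > 1\<close>.\<close>

lemma dist_int_le: "dist_int t \<le> \<bar>t - of_int k\<bar>"
  unfolding dist_int_def by (rule cINF_lower) (auto intro: bdd_belowI[where m=0])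

lemma dist_int_eq_round: "dist_int t = \<bar>t - of_int (round t)\<bar>"
proof (rule antisym)
  show "dist_int t \<le> \<bar>t - of_int (round t)\<bar>" by (rule dist_int_le)
  have "\<bar>t - of_int (round t)\<bar> \<le> \<bar>t - k\<bar>" if "k \<in> \<int>" for k
  proof -
    from that obtain m where k: "k = of_int m" by (auto elim: Ints_cases)
    have "\<bar>t - of_int (round t)\<bar> \<le> 1/2"
      using of_int_round_abs_le[of t] by (simp add: abs_minus_commute)
    moreover have "m = round t" if "\<bar>t - of_int m\<bar> < \<bar>t - of_int (round t)\<bar>"
    proof -
      have "\<bar>of_int m - of_int (round t)\<bar> < (1::real)"
        using that \<open>\<bar>t - of_int (round t)\<bar> \<le> 1/2\<close> by linarith
      then show ?thesis by linarith
    qed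
    ultimately show ?thesis unfolding k by force
  qed
  then show "\<bar>t - of_int (round t)\<bar> \<le> dist_int t"
    unfolding dist_int_def by (intro cINF_greatest) (auto intro: Ints_of_int)
qed

lemma dist_int_nonneg: "0 \<le> dist_int t"
  by (simp add: dist_int_eq_round)

lemma dist_int_pos: "t \<notin> \<int> \<Longrightarrow> 0 < dist_int t"
  unfolding dist_int_eq_round by (cases "t = of_int (round t)") (metis Ints_of_int, simp)

lemma dist_int_add_of_int: "dist_int (t + of_int k) = dist_int t"
proof (rule antisym)
  show "dist_int (t + of_int k) \<le> dist_int t"
    using dist_int_le[of "t + of_int k" "round t + k"] by (simp add: dist_int_eq_round)
  show "dist_int t \<le> dist_int (t + of_int k)"
    using dist_int_le[of t "round (t + of_int k) - k"] by (simp add: dist_int_eq_round)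
qed

lemma dist_int_mult_of_int_le: "dist_int (of_int q * t) \<le> \<bar>of_int q\<bar> * dist_int t"
proof -
  have "dist_int (of_int q * t) \<le> \<bar>of_int q * t - of_int (q * round t)\<bar>"
    by (rule dist_int_le)
  also have "\<dots> = \<bar>of_int q\<bar> * dist_int t"
    by (simp add: dist_int_eq_round abs_mult[symmetric] algebra_simps)
  finally show ?thesis .
qed

lemma Rats_mult_notin_Ints:
  assumes "x \<notin> \<rat>" "q \<in> \<rat>" "q \<noteq> 0"
  shows "q * x \<notin> \<int>"
proof
  assume "q * x \<in> \<int>"
  then have "q * x / q \<in> \<rat>" using Ints_subset_Rats assms(2) by (blast intro: Rats_divide)
  then show False using assms by simp
qed

text \<open>Whenever \<open>M x\<close> is strictly closer to \<open>\<int>\<close> than \<open>A x\<close> with \<open>A \<le> M\<close>, the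
  integer \<open>A round (M x) - M round (A x)\<close> is nonzero and of size below \<open>2 M \<parallel>A x\<parallel>\<close>.\<close>
lemma dist_int_improvement_bound:
  fixes A M :: nat
  assumes "A \<le> M" and closer: "dist_int (real M * x) < dist_int (real A * x)"
  shows "1 < 2 * real M * dist_int (real A * x)"
proof -
  define eA where "eA = real A * x - of_int (round (real A * x))"
  define eM where "eM = real M * x - of_int (round (real M * x))"
  define z where "z = int A * round (real M * x) - int M * round (real A * x)"
  have z: "of_int z = real M * eA - real A * eM"
    unfolding z_def eA_def eM_def by (simp add: algebra_simps)
  have "M > 0" using assms by (cases "M = 0") (auto simp: dist_int_nonneg not_less)
  have "real A * \<bar>eM\<bar> \<le> real M * \<bar>eM\<bar>" using \<open>A \<le> M\<close> by (simp add: mult_right_mono)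
  also have "\<dots> < real M * \<bar>eA\<bar>"
    using closer \<open>M > 0\<close> unfolding eA_def eM_def dist_int_eq_round by simp
  finally have less: "real A * \<bar>eM\<bar> < real M * \<bar>eA\<bar>" .
  have "z \<noteq> 0"
  proof
    assume "z = 0"
    then have "\<bar>real M * eA\<bar> = \<bar>real A * eM\<bar>" using z by simp
    with less show False by (simp add: abs_mult)
  qed
  then have "1 \<le> \<bar>of_int z :: real\<bar>" by linarith
  also have "\<dots> \<le> real M * \<bar>eA\<bar> + real A * \<bar>eM\<bar>" unfolding z
    using abs_triangle_ineq4[of "real M * eA" "real A * eM"] by (simp add: abs_mult)
  finally show ?thesis using less unfolding eA_def dist_int_eq_round by linarith
qed

text \<open>The \<open>max 1 k\<close> only makes the value at \<open>k = 0\<close> agree with that at \<open>k = 1\<close>.\<close>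
definition min_dist_int_mult :: "real \<Rightarrow> nat \<Rightarrow> real" where
  "min_dist_int_mult x k = Min ((\<lambda>j. dist_int (real j * x)) ` {1..max 1 k})"

lemma min_dist_int_mult_le:
  "1 \<le> j \<Longrightarrow> j \<le> max 1 k \<Longrightarrow> min_dist_int_mult x k \<le> dist_int (real j * x)"
  unfolding min_dist_int_mult_def by (rule Min_le) auto

lemma min_dist_int_mult_attained:
  obtains j where "1 \<le> j" "j \<le> max 1 k" "min_dist_int_mult x k = dist_int (real j * x)"
proof -
  have "min_dist_int_mult x k \<in> (\<lambda>j. dist_int (real j * x)) ` {1..max 1 k}"
    unfolding min_dist_int_mult_def by (rule Min_in) auto
  then show ?thesis using that by auto
qed

lemma min_dist_int_mult_antimono:
  assumes "k \<le> k'"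
  shows "min_dist_int_mult x k' \<le> min_dist_int_mult x k"
proof -
  obtain j where "1 \<le> j" "j \<le> max 1 k" "min_dist_int_mult x k = dist_int (real j * x)"
    by (rule min_dist_int_mult_attained)
  moreover have "j \<le> max 1 k'" using \<open>j \<le> max 1 k\<close> assms by simp
  ultimately show ?thesis using min_dist_int_mult_le[of j k' x] by simp
qed

lemma min_dist_int_mult_pos:
  assumes "x \<notin> \<rat>"
  shows "0 < min_dist_int_mult x k"
proof -
  obtain j where "1 \<le> j" "min_dist_int_mult x k = dist_int (real j * x)"
    by (rule min_dist_int_mult_attained)
  moreover have "real j * x \<notin> \<int>"
    using assms \<open>1 \<le> j\<close> by (intro Rats_mult_notin_Ints) auto
  ultimately show ?thesis using dist_int_pos by simp
qed

text \<open>Olivier's theorem: the tail sums over \<open>[n - n div 2, n]\<close> dominate \<open>(n div 2 + 1) g n\<close>.\<close>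
lemma decseq_summable_imp_LIMSEQ_mult_zero:
  fixes g :: "nat \<Rightarrow> real"
  assumes dec: "decseq g" and sum: "summable g"
  shows "(\<lambda>n. real n * g n) \<longlonglongrightarrow> 0"
proof (rule LIMSEQ_I)
  fix e :: real assume "0 < e"
  have nonneg: "0 \<le> g n" for n
    using decseq_ge[OF dec summable_LIMSEQ_zero[OF sum]] .
  from sum obtain N where N: "\<And>m n. m \<ge> N \<Longrightarrow> norm (sum g {m..<n}) < e/2"
    unfolding summable_Cauchy using \<open>0 < e\<close> by (meson half_gt_zero)
  have "norm (real n * g n - 0) < e" if "n \<ge> 2 * N" for n
  proof -
    let ?m = "n - n div 2"
    have "real (n div 2 + 1) * g n = real (card {?m..<Suc n}) * g n" by simp
    also have "\<dots> \<le> sum g {?m..<Suc n}"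
      by (rule sum_bounded_below) (use dec in \<open>auto simp: decseq_def\<close>)
    also have "\<dots> < e/2" using N[of ?m "Suc n"] that by (simp add: sum_nonneg nonneg)
    finally have "real (n div 2 + 1) * g n < e/2" .
    moreover have "real n \<le> 2 * real (n div 2 + 1)"
      using of_nat_mono[of n "2 * (n div 2 + 1)"] by simp
    then have "real n * g n \<le> 2 * real (n div 2 + 1) * g n"
      using nonneg[of n] by (rule mult_right_mono)
    ultimately show ?thesis using nonneg[of n] by (simp add: ring_distribs)
  qed
  then show "\<exists>N. \<forall>n\<ge>N. norm (real n * g n - 0) < e" by blast
qed

text \<open>Take \<open>d = min_dist_int_mult x N\<close> and let \<open>k\<close> be the first index where the minimum
  drops below \<open>d\<close>; then \<open>min_dist_int_mult x (k - 1) \<ge> d\<close>, while the improvement bound at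
  the new minimiser gives \<open>1 < 2 k d\<close>.\<close>
lemma not_eventually_min_dist_int_mult_small:
  assumes "x \<notin> \<rat>"
  shows "\<not> (\<forall>\<^sub>F m in sequentially. 4 * real m * min_dist_int_mult x m < 1)"
proof
  assume "\<forall>\<^sub>F m in sequentially. 4 * real m * min_dist_int_mult x m < 1"
  then obtain N0 where small0: "\<And>m. m \<ge> N0 \<Longrightarrow> 4 * real m * min_dist_int_mult x m < 1"
    by (auto simp: eventually_sequentially)
  define N where "N = max 1 N0"
  define f where "f = min_dist_int_mult x"
  have small: "4 * real m * f m < 1" if "N \<le> m" for m
    using small0 that unfolding N_def f_def by simp
  have "N \<ge> 1" unfolding N_def by simp
  have f_pos: "0 < f m" for m unfolding f_def using min_dist_int_mult_pos[OF assms] .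
  define d where "d = f N"
  have "d > 0" unfolding d_def by (rule f_pos)
  obtain A where A: "1 \<le> A" "A \<le> max 1 N" "d = dist_int (real A * x)"
    unfolding d_def f_def by (rule min_dist_int_mult_attained)
  have "\<exists>k. f k < d"
  proof -
    obtain m0 :: nat where "1 / d < real m0" using reals_Archimedean2 by blast
    define m where "m = max N m0"
    have "1 < d * real m0" using \<open>1 / d < real m0\<close> \<open>d > 0\<close> by (simp add: field_simps)
    also have "\<dots> \<le> d * real m" using \<open>d > 0\<close> unfolding m_def by (intro mult_left_mono) auto
    finally have "1 < d * real m" .
    then have "4 * real m * f m < d * real m" using small[of m] unfolding m_def by simp
    moreover have "0 < real m" using \<open>N \<ge> 1\<close> unfolding m_def by simp
    ultimately have "4 * f m < d" by (simp add: mult.commute mult.left_commute)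
    then show ?thesis using f_pos[of m] by (intro exI[of _ m]) linarith
  qed
  define k where "k = (LEAST k. f k < d)"
  have "f k < d" unfolding k_def using LeastI_ex[OF \<open>\<exists>k. f k < d\<close>] .
  then have "N < k" unfolding d_def f_def using min_dist_int_mult_antimono[of k N x] by linarith
  have "d \<le> f (k - 1)"
    using not_less_Least[of "k - 1" "\<lambda>k. f k < d"] \<open>N < k\<close> unfolding k_def by simp
  obtain j where j: "1 \<le> j" "j \<le> k" "dist_int (real j * x) < d"
    using min_dist_int_mult_attained[of k x] \<open>f k < d\<close> \<open>N < k\<close> unfolding f_def by force
  have "A \<le> j"
  proof (rule ccontr)
    assume "\<not> A \<le> j"
    then have "d \<le> dist_int (real j * x)"
      using min_dist_int_mult_le[OF j(1), of N x] A(2) unfolding d_def f_def by linarith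
    then show False using j(3) by simp
  qed
  have "(1::real) < 2 * real j * d"
    using dist_int_improvement_bound[OF \<open>A \<le> j\<close>] j(3) A(3) by simp
  also have "\<dots> \<le> 4 * real (k - 1) * d"
    using \<open>j \<le> k\<close> \<open>N < k\<close> \<open>N \<ge> 1\<close> \<open>d > 0\<close> by (simp add: of_nat_diff)
  also have "\<dots> \<le> 4 * real (k - 1) * f (k - 1)"
    using \<open>d \<le> f (k - 1)\<close> by (intro mult_left_mono) auto
  also have "\<dots> < 1" using small[of "k - 1"] \<open>N < k\<close> unfolding f_def by simp
  finally have "(1::real) < 1" .
  then show False by simp
qed

lemma not_summable_min_dist_int_mult:
  assumes "x \<notin> \<rat>" "C \<ge> 1"
  shows "\<not> summable (\<lambda>n. min_dist_int_mult x (C * n))"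
proof
  define g where "g n = min_dist_int_mult x (C * n)" for n
  assume "summable (\<lambda>n. min_dist_int_mult x (C * n))"
  then have "(\<lambda>n. real n * g n) \<longlonglongrightarrow> 0"
    unfolding g_def by (intro decseq_summable_imp_LIMSEQ_mult_zero)
      (auto simp: decseq_def intro: min_dist_int_mult_antimono)
  then obtain N where N: "\<And>n. n \<ge> N \<Longrightarrow> real n * g n < 1 / (8 * real C)"
    using \<open>C \<ge> 1\<close> order_tendstoD(2)[of _ 0 sequentially "1 / (8 * real C)"]
    by (force simp: eventually_sequentially)
  have "4 * real m * min_dist_int_mult x m < 1" if "m \<ge> C * Suc N" for m
  proof -
    define n where "n = m div C"
    have "Suc N \<le> n" using that \<open>C \<ge> 1\<close> unfolding n_def
      by (simp add: less_eq_div_iff_mult_less_eq mult.commute)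
    then have "N < n" by simp
    have "C * n \<le> m" unfolding n_def by (simp add: mult.commute)
    have "m = C * n + m mod C" unfolding n_def by simp
    then have "m < C * n + C" using mod_less_divisor[of C m] \<open>C \<ge> 1\<close> by linarith
    have "C \<le> C * n" using \<open>N < n\<close> by simp
    then have "m \<le> 2 * C * n" using \<open>m < C * n + C\<close> by linarith
    then have m_le: "real m \<le> 2 * real C * real n" by (metis of_nat_le_iff of_nat_mult of_nat_numeral)
    have "min_dist_int_mult x m \<le> g n"
      unfolding g_def using \<open>C * n \<le> m\<close> by (rule min_dist_int_mult_antimono)
    moreover have "0 \<le> min_dist_int_mult x m"
      using min_dist_int_mult_pos[OF \<open>x \<notin> \<rat>\<close>] less_imp_le by blast
    ultimately have "4 * real m * min_dist_int_mult x m \<le> 4 * (2 * real C * real n) * g n"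
      using m_le by (intro mult_mono) auto
    also have "\<dots> = 8 * real C * (real n * g n)" by simp
    also have "\<dots> < 1"
      using N[of n] \<open>N < n\<close> \<open>C \<ge> 1\<close> by (simp add: field_simps)
    finally show ?thesis .
  qed
  then show False
    using not_eventually_min_dist_int_mult_small[OF \<open>x \<notin> \<rat>\<close>]
    by (auto simp: eventually_sequentially)
qed

lemma DsetI:
  assumes "\<And>n. 0 \<le> \<psi> n" "decseq \<psi>" "\<not> summable \<psi>"
  shows "\<psi> \<in> Dset"
  using assms unfolding Dset_def decseq_def summable_Suc_iff by auto

lemma not_in_Pi_setI:
  assumes "\<psi> \<in> Dset" "finite {n. 1 \<le> n \<and> dist_int (real n * x + y) < \<psi> n}"
  shows "(x, y) \<notin> Pi_set"
  using assms unfolding Pi_set_def W_def by auto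

lemma rational_irrational_not_in_Pi_set:
  assumes "x \<in> \<rat>" "y \<notin> \<rat>"
  shows "(x, y) \<notin> Pi_set"
proof -
  obtain P Q where "Q > 0" and x: "x = of_int P / of_int Q"
    using Rats_cases'[OF \<open>x \<in> \<rat>\<close>] by metis
  define d where "d = dist_int (of_int Q * y) / of_int Q"
  have "d > 0"
    unfolding d_def using \<open>Q > 0\<close> \<open>y \<notin> \<rat>\<close>
    by (simp add: dist_int_pos Rats_mult_notin_Ints)
  have "\<not> dist_int (real n * x + y) < d" for n :: nat
  proof -
    have "dist_int (of_int Q * y) = dist_int (of_int Q * (real n * x + y) + of_int (- int n * P))"
      using \<open>Q > 0\<close> unfolding x by (simp add: field_simps)
    also have "\<dots> \<le> of_int Q * dist_int (real n * x + y)"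
      unfolding dist_int_add_of_int using dist_int_mult_of_int_le[of Q] \<open>Q > 0\<close> by simp
    finally show ?thesis unfolding d_def using \<open>Q > 0\<close> by (simp add: field_simps not_less)
  qed
  then have "finite {n. 1 \<le> n \<and> dist_int (real n * x + y) < d}" by simp
  moreover have "(\<lambda>_. d) \<in> Dset"
    using \<open>d > 0\<close> by (intro DsetI) (auto simp: decseq_def summable_const_iff)
  ultimately show ?thesis by (rule not_in_Pi_setI[rotated])
qed

lemma Rats_affine_common_denominator:
  fixes x :: real
  assumes "r \<in> \<rat>" "s \<in> \<rat>"
  obtains Q P S :: int where "Q > 0" "of_int Q * (r + s * x) = of_int P + of_int S * x"
proof -
  obtain P1 Q1 where "Q1 > 0" and r: "r = of_int P1 / of_int Q1"
    using Rats_cases'[OF \<open>r \<in> \<rat>\<close>] by metis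
  obtain S2 Q2 where "Q2 > 0" and s: "s = of_int S2 / of_int Q2"
    using Rats_cases'[OF \<open>s \<in> \<rat>\<close>] by metis
  show thesis
  proof (rule that[of "Q1 * Q2" "P1 * Q2" "S2 * Q1"])
    show "Q1 * Q2 > 0" using \<open>Q1 > 0\<close> \<open>Q2 > 0\<close> by simp
    show "of_int (Q1 * Q2) * (r + s * x) = of_int (P1 * Q2) + of_int (S2 * Q1) * x"
      unfolding r s using \<open>Q1 > 0\<close> \<open>Q2 > 0\<close> by (simp add: field_simps)
  qed
qed

text \<open>With \<open>Q y = P + S x\<close>, \<open>Q (n x + y) \<equiv> (Q n + S) x\<close> modulo \<open>\<int>\<close> and \<open>Q n + S \<le> C n\<close>, so
  \<open>\<psi> n = min_dist_int_mult x (C n) / Q\<close> lies below \<open>\<parallel>n x + y\<parallel>\<close> once \<open>n > \<bar>S\<bar>\<close>.\<close>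
lemma irrational_affine_not_in_Pi_set:
  assumes "x \<notin> \<rat>" "Q > 0" and y: "of_int Q * y = of_int P + of_int S * x"
  shows "(x, y) \<notin> Pi_set"
proof -
  define C where "C = nat Q + nat \<bar>S\<bar>"
  define \<psi> where "\<psi> n = min_dist_int_mult x (C * n) / of_int Q" for n
  have "\<psi> \<in> Dset"
  proof (rule DsetI)
    show "0 \<le> \<psi> n" for n
      unfolding \<psi>_def using min_dist_int_mult_pos[OF \<open>x \<notin> \<rat>\<close>] \<open>Q > 0\<close> by (simp add: less_imp_le)
    show "decseq \<psi>"
      unfolding \<psi>_def decseq_def using \<open>Q > 0\<close>
      by (auto intro!: divide_right_mono min_dist_int_mult_antimono)
    show "\<not> summable \<psi>"
      unfolding \<psi>_def using not_summable_min_dist_int_mult[OF \<open>x \<notin> \<rat>\<close>, of C] \<open>Q > 0\<close>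
      by (simp add: summable_divide_iff C_def)
  qed
  moreover have below: "\<psi> n \<le> dist_int (real n * x + y)" if "nat \<bar>S\<bar> < n" for n
  proof -
    have "\<bar>S\<bar> < int n" using that by linarith
    define k where "k = nat (Q * int n + S)"
    have "n \<ge> 1" using that by simp
    have "Q * int n \<ge> int n" using mult_right_mono[of 1 Q "int n"] \<open>Q > 0\<close> by simp
    then have "real k = of_int Q * real n + of_int S" "k \<ge> 1"
      using \<open>\<bar>S\<bar> < int n\<close> unfolding k_def by auto
    have "\<bar>S\<bar> \<le> \<bar>S\<bar> * int n" using \<open>n \<ge> 1\<close> by (simp add: mult_le_cancel_left1)
    then have "k \<le> C * n" unfolding k_def C_def using \<open>Q > 0\<close> by (simp add: nat_le_iff algebra_simps)
    have "min_dist_int_mult x (C * n) \<le> dist_int (real k * x)"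
      using \<open>k \<ge> 1\<close> \<open>k \<le> C * n\<close> by (intro min_dist_int_mult_le) auto
    also have "\<dots> = dist_int (of_int Q * (real n * x + y) + of_int (- P))"
      using \<open>real k = _\<close> y by (simp add: algebra_simps)
    also have "\<dots> \<le> of_int Q * dist_int (real n * x + y)"
      unfolding dist_int_add_of_int using dist_int_mult_of_int_le[of Q] \<open>Q > 0\<close> by simp
    finally show ?thesis unfolding \<psi>_def using \<open>Q > 0\<close> by (simp add: field_simps)
  qed
  have "{n. 1 \<le> n \<and> dist_int (real n * x + y) < \<psi> n} \<subseteq> {..nat \<bar>S\<bar>}"
  proof
    fix n assume n: "n \<in> {n. 1 \<le> n \<and> dist_int (real n * x + y) < \<psi> n}"
    show "n \<in> {..nat \<bar>S\<bar>}"
    proof (rule ccontr)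
      assume "n \<notin> {..nat \<bar>S\<bar>}"
      then have "\<psi> n \<le> dist_int (real n * x + y)" by (intro below) simp
      with n show False by simp
    qed
  qed
  then have "finite {n. 1 \<le> n \<and> dist_int (real n * x + y) < \<psi> n}"
    by (rule finite_subset) simp
  ultimately show ?thesis by (rule not_in_Pi_setI)
qed

theorem lemma25:
  fixes x y :: real
  assumes "\<exists>a b c :: rat. (a, b, c) \<noteq> (0, 0, 0) \<and>
             of_rat a + of_rat b * x + of_rat c * y = 0"
    and "x \<notin> \<rat> \<or> y \<notin> \<rat>"
  shows "(x, y) \<notin> Pi_set"
proof -
  obtain a b c :: rat where abc: "(a, b, c) \<noteq> (0, 0, 0)" "of_rat a + of_rat b * x + of_rat c * y = 0"
    using assms(1) by blast
  show ?thesis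
  proof (cases "c = 0")
    case True
    with abc have "x = of_rat (- a / b)"
      by (cases "b = 0") (auto simp: field_simps of_rat_divide of_rat_minus)
    then have "x \<in> \<rat>" by simp
    with assms(2) show ?thesis using rational_irrational_not_in_Pi_set by blast
  next
    case False
    with abc have y: "y = of_rat (- a / c) + of_rat (- b / c) * x"
      by (simp add: field_simps of_rat_divide of_rat_minus)
    then have "x \<notin> \<rat>" using assms(2) by auto
    obtain Q P S :: int where "Q > 0" "of_int Q * y = of_int P + of_int S * x"
      unfolding y by (rule Rats_affine_common_denominator[OF Rats_of_rat Rats_of_rat])
    then show ?thesis by (intro irrational_affine_not_in_Pi_set[OF \<open>x \<notin> \<rat>\<close>])
  qed
qed

end
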